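(* Let $X$ be a Tychonoff space. If player II has a winning strategy in the game $\mathsf{G}_1(\mathcal{O}, \mathcal{O})$ played on $X$, then player II has a winning strategy in the game $\mathsf{G}_1(\Omega_{\mathrm{o}}, \Omega_{\mathrm{o}})$ played on $C_p(X)$, and $C_p(X)$ is productively countably tight.
   Context: $\mathcal{O}$ is the collection of all open covers of $X$. For families $\mathcal{A},\mathcal{B}$, the game $\mathsf{G}_1(\mathcal{A},\mathcal{B})$ is played in innings $n \in \omega$: player I chooses $A_n \in \mathcal{A}$, then player II chooses $a_n \in A_n$; II wins iff $\{a_n : n \in \omega\} \in \mathcal{B}$. $C_p(X)$ is the space of continuous real-valued functions on $X$ with the topology of pointwise convergence, $\mathrm{o}$ is the constant zero function, and $\Omega_{\mathrm{o}}$ is the collection of all sets $A \subset C_p(X)$ with $\mathrm{o} \notin A$ and $\mathrm{o} \in \overline{A}$. A space $Z$ is productively countably tight if $Z \times Y$ is countably tight for every countably tight space $Y$ (countably tight: whenever $y \in \overline{A}$ there is a countable $B \subset A$ with $y \in \overline{B}$). *)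

theory Defs
  imports "HOL-Analysis.Analysis"
begin

definition tychonoff_space :: "'a topology \<Rightarrow> bool" where
  "tychonoff_space X \<longleftrightarrow> t1_space X \<and> completely_regular_space X"

definition open_covers :: "'a topology \<Rightarrow> 'a set set set" where
  "open_covers X = {\<U>. (\<forall>U\<in>\<U>. openin X U) \<and> \<Union>\<U> = topspace X}"

text \<open>Player II has a winning strategy in G_1(A,B). A strategy for II maps the
  finite list of I's moves so far (A_0,...,A_n) to II's answer a_n.\<close>
definition II_wins_G1 :: "'x set set \<Rightarrow> 'x set set \<Rightarrow> bool" where
  "II_wins_G1 \<A> \<B> \<longleftrightarrow>
     (\<exists>\<sigma> :: 'x set list \<Rightarrow> 'x.
        \<forall>F :: nat \<Rightarrow> 'x set. (\<forall>n. F n \<in> \<A>) \<longrightarrow>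
          (\<forall>n. \<sigma> (map F [0..<Suc n]) \<in> F n) \<and>
          range (\<lambda>n. \<sigma> (map F [0..<Suc n])) \<in> \<B>)"

text \<open>C_p(X): continuous real functions on X (extended by undefined outside
  topspace X), with the topology of pointwise convergence, i.e. the subspace
  topology inherited from the product topology R^X.\<close>
definition Cp :: "'a topology \<Rightarrow> ('a \<Rightarrow> real) topology" where
  "Cp X = subtopology (product_topology (\<lambda>_. euclideanreal) (topspace X))
            {f. continuous_map X euclideanreal f \<and> f \<in> extensional (topspace X)}"

definition zero_fun :: "'a topology \<Rightarrow> 'a \<Rightarrow> real" where
  "zero_fun X = restrict (\<lambda>_. 0) (topspace X)"

definition Omega_o :: "'a topology \<Rightarrow> ('a \<Rightarrow> real) set set" where
  "Omega_o X = {A. A \<subseteq> topspace (Cp X) \<and> zero_fun X \<notin> A \<and> zero_fun X \<in> (Cp X) closure_of A}"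

definition countably_tight :: "'a topology \<Rightarrow> bool" where
  "countably_tight Y \<longleftrightarrow>
     (\<forall>A y. A \<subseteq> topspace Y \<and> y \<in> Y closure_of A \<longrightarrow>
        (\<exists>B\<subseteq>A. countable B \<and> y \<in> Y closure_of B))"

end

theory Submission
  imports Defs
begin

text \<open>By Galvin's duality, a winning strategy of II in \<open>G\<^sub>1(\<O>, \<O>)\<close> yields a winning strategy
  \<open>\<rho>\<close> of ONE in the point-open game. Both conclusions then rest on one density argument:
  choose functions in stages so that those of stage \<open>n\<close> are \<open>1/(n+1)\<close>-close to \<open>g\<close> at ONE's
  answers to all short plays made of the sets where earlier functions are close to \<open>g\<close>. If a basic
  neighbourhood of \<open>g\<close>, determined by a finite set \<open>G\<close>, missed all chosen functions, then TWO
  could defeat \<open>\<rho>\<close> by always answering with such a set that misses a point of \<open>G\<close>. In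
  \<open>G\<^sub>1(\<Omega>\<^sub>o, \<Omega>\<^sub>o)\<close> every inning supplies one stage; for the tightness of
  \<open>C\<^sub>p(X) \<times> Y\<close> each stage consists of countably many points whose second coordinates still
  accumulate at the given point of \<open>Y\<close>.\<close>

section \<open>Pointwise convergence\<close>

definition approx_set :: "'a topology \<Rightarrow> ('a \<Rightarrow> real) \<Rightarrow> real \<Rightarrow> ('a \<Rightarrow> real) \<Rightarrow> 'a set" where
  "approx_set X g e f = {x \<in> topspace X. \<bar>f x - g x\<bar> < e}"

lemma approx_set_mono: "e \<le> e' \<Longrightarrow> approx_set X g e f \<subseteq> approx_set X g e' f"
  by (auto simp: approx_set_def)

lemma topspace_Cp:
  "topspace (Cp X) = {f. continuous_map X euclideanreal f \<and> f \<in> extensional (topspace X)}"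
  by (auto simp: Cp_def PiE_def extensional_def Pi_def)

lemma zero_fun_in_topspace_Cp: "zero_fun X \<in> topspace (Cp X)"
  by (auto simp: topspace_Cp zero_fun_def continuous_map_eq[where f = "\<lambda>_. 0"])

lemma continuous_map_Cp_eval:
  "x \<in> topspace X \<Longrightarrow> continuous_map (Cp X) euclideanreal (\<lambda>f. f x)"
  unfolding Cp_def
  by (intro continuous_map_from_subtopology continuous_map_product_projection)

lemma openin_approx_set:
  assumes "f \<in> topspace (Cp X)" "g \<in> topspace (Cp X)"
  shows "openin X (approx_set X g e f)"
proof -
  have "continuous_map X euclideanreal (\<lambda>x. \<bar>f x - g x\<bar>)"
    using assms by (intro continuous_intros) (auto simp: topspace_Cp)
  from openin_continuous_map_preimage[OF this, of "{..<e}"]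
  show ?thesis by (simp add: approx_set_def)
qed

lemma openin_Cp_approx:
  assumes "finite F" "F \<subseteq> topspace X"
  shows "openin (Cp X) {f \<in> topspace (Cp X). F \<subseteq> approx_set X g e f}"
proof -
  have "openin (Cp X) {f \<in> topspace (Cp X). \<bar>f x - g x\<bar> \<in> {..<e}}" if "x \<in> F" for x
  proof -
    have "continuous_map (Cp X) euclideanreal (\<lambda>f. f x)"
      using that assms(2) by (intro continuous_map_Cp_eval) auto
    then have "continuous_map (Cp X) euclideanreal (\<lambda>f. \<bar>f x - g x\<bar>)"
      by (intro continuous_intros)
    then show ?thesis by (rule openin_continuous_map_preimage) simp
  qed
  then have "openin (Cp X) ((\<Inter>x\<in>F. {f \<in> topspace (Cp X). \<bar>f x - g x\<bar> \<in> {..<e}}) \<inter> topspace (Cp X))"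
    using assms(1) by (intro openin_INT) auto
  moreover have "(\<Inter>x\<in>F. {f \<in> topspace (Cp X). \<bar>f x - g x\<bar> \<in> {..<e}}) \<inter> topspace (Cp X)
      = {f \<in> topspace (Cp X). F \<subseteq> approx_set X g e f}"
    using assms(2) unfolding approx_set_def by blast
  ultimately show ?thesis by simp
qed

lemma Cp_approx_nbhd_basis:
  assumes "openin (Cp X) T" "g \<in> T"
  obtains G e where "finite G" "G \<subseteq> topspace X" "e > 0"
    "\<And>f. f \<in> topspace (Cp X) \<Longrightarrow> G \<subseteq> approx_set X g e f \<Longrightarrow> f \<in> T"
proof -
  obtain S where S: "openin (product_topology (\<lambda>_. euclideanreal) (topspace X)) S"
    and TS: "T = S \<inter> topspace (Cp X)"
    using assms(1) topspace_Cp[of X] unfolding Cp_def openin_subtopology by auto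
  have "g \<in> S" using assms(2) TS by blast
  then have "\<exists>U. finite {i \<in> topspace X. U i \<noteq> UNIV} \<and> (\<forall>i\<in>topspace X. open (U i)) \<and>
      g \<in> Pi\<^sub>E (topspace X) U \<and> Pi\<^sub>E (topspace X) U \<subseteq> S"
    using S unfolding openin_product_topology_alt by simp
  then obtain U where fin: "finite {i \<in> topspace X. U i \<noteq> UNIV}"
      and Uo: "\<forall>i\<in>topspace X. open (U i)" and gU: "g \<in> Pi\<^sub>E (topspace X) U"
      and US: "Pi\<^sub>E (topspace X) U \<subseteq> S"
    by blast
  define G where "G = {i \<in> topspace X. U i \<noteq> UNIV}"
  have "\<exists>d>0. ball (g i) d \<subseteq> U i" if "i \<in> G" for i
  proof -
    have "open (U i)" "g i \<in> U i" using that Uo gU by (auto simp: G_def)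
    then show ?thesis by (rule openE) blast
  qed
  then obtain d where d: "\<And>i. i \<in> G \<Longrightarrow> d i > 0 \<and> ball (g i) (d i) \<subseteq> U i"
    by metis
  define e where "e = Min (insert 1 (d ` G))"
  have "finite G" using fin by (simp add: G_def)
  then have e: "e > 0" "\<And>i. i \<in> G \<Longrightarrow> e \<le> d i"
    using d by (auto simp: e_def)
  show thesis
  proof (rule that[OF \<open>finite G\<close> _ \<open>e > 0\<close>])
    fix f assume f: "f \<in> topspace (Cp X)" and fG: "G \<subseteq> approx_set X g e f"
    have "f i \<in> U i" if "i \<in> topspace X" for i
    proof (cases "i \<in> G")
      case True
      then have "dist (g i) (f i) < d i"
        using fG e(2)[OF True] by (auto simp: approx_set_def dist_real_def abs_minus_commute)
      then show ?thesis using d[OF True] by auto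
    qed (use that G_def in auto)
    then have "f \<in> Pi\<^sub>E (topspace X) U"
      using f by (simp add: topspace_Cp PiE_iff)
    with f US TS show "f \<in> T" by blast
  qed (simp add: G_def)
qed

lemma in_closure_of_Cp_approx:
  assumes "g \<in> Cp X closure_of A" "finite F" "F \<subseteq> topspace X" "e > 0"
  obtains f where "f \<in> A" "F \<subseteq> approx_set X g e f"
proof -
  let ?N = "{f \<in> topspace (Cp X). F \<subseteq> approx_set X g e f}"
  have "F \<subseteq> approx_set X g e g"
    using assms(3,4) by (auto simp: approx_set_def)
  then have "g \<in> ?N"
    using assms(1) by (simp add: in_closure_of)
  then obtain f where "f \<in> A" "f \<in> ?N"
    using assms(1) openin_Cp_approx[OF assms(2,3)] unfolding in_closure_of by meson
  with that show thesis by blast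
qed

lemma Omega_o_approx:
  assumes "A \<in> Omega_o X" "finite F" "F \<subseteq> topspace X" "e > 0"
  shows "\<exists>f\<in>A. F \<subseteq> approx_set X (zero_fun X) e f"
proof -
  have "zero_fun X \<in> Cp X closure_of A"
    using assms(1) by (simp add: Omega_o_def)
  then obtain f where "f \<in> A" "F \<subseteq> approx_set X (zero_fun X) e f"
    using in_closure_of_Cp_approx[OF _ assms(2-4)] by blast
  then show ?thesis
    by blast
qed

lemma in_closure_of_prod_Cp_approx:
  assumes "(g, y) \<in> prod_topology (Cp X) Y closure_of A" and F: "finite F" "F \<subseteq> topspace X"
    and "e > 0"
  shows "y \<in> Y closure_of (snd ` {q \<in> A. F \<subseteq> approx_set X g e (fst q)})"
  unfolding in_closure_of
proof (intro conjI allI impI)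
  show "y \<in> topspace Y"
    using assms(1) by (simp add: in_closure_of)
next
  fix U assume "y \<in> U \<and> openin Y U"
  then have "y \<in> U" "openin Y U"
    by auto
  let ?N = "{f \<in> topspace (Cp X). F \<subseteq> approx_set X g e f}"
  have "openin (prod_topology (Cp X) Y) (?N \<times> U)"
    using openin_Cp_approx[OF F] \<open>openin Y U\<close> by (simp add: openin_prod_Times_iff)
  moreover have "(g, y) \<in> ?N \<times> U"
    using assms(1) F(2) \<open>e > 0\<close> \<open>y \<in> U\<close> by (auto simp: approx_set_def in_closure_of)
  ultimately obtain q where "q \<in> A" "q \<in> ?N \<times> U"
    using assms(1) unfolding in_closure_of by meson
  then show "\<exists>z. z \<in> snd ` {q \<in> A. F \<subseteq> approx_set X g e (fst q)} \<and> z \<in> U"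
    by force
qed

lemma countably_tight_closure_seq:
  assumes "countably_tight Y" "f ` S \<subseteq> topspace Y" "y \<in> Y closure_of (f ` S)"
  shows "\<exists>x :: nat \<Rightarrow> 'c. range x \<subseteq> S \<and> y \<in> Y closure_of (f ` range x)"
proof -
  have "\<exists>C. C \<subseteq> f ` S \<and> countable C \<and> y \<in> Y closure_of C"
    using assms unfolding countably_tight_def by blast
  then obtain B where B: "B \<subseteq> S" "inj_on f B" "countable (f ` B)" "y \<in> Y closure_of (f ` B)"
    unfolding ex_subset_image_inj by blast
  then have "B \<noteq> {}" "countable B"
    using countable_image_inj_on by fastforce+
  then have "range (from_nat_into B) = B"
    by (rule range_from_nat_into)
  with B show ?thesis
    by (intro exI[of _ "from_nat_into B"]) simp
qed

section \<open>Strategies that remember their own moves\<close>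

definition responses :: "('b list \<Rightarrow> 'a \<Rightarrow> 'b) \<Rightarrow> 'a list \<Rightarrow> 'b list" where
  "responses f xs = foldl (\<lambda>bs x. bs @ [f bs x]) [] xs"

lemma responses_Nil [simp]: "responses f [] = []"
  by (simp add: responses_def)

lemma responses_snoc [simp]: "responses f (xs @ [x]) = responses f xs @ [f (responses f xs) x]"
  by (simp add: responses_def)

lemma responses_map_upt:
  "responses f (map a [0..<n]) = map (\<lambda>k. f (responses f (map a [0..<k])) (a k)) [0..<n]"
  by (induction n) simp_all

lemma course_of_values_choice:
  fixes Q :: "nat \<Rightarrow> (nat \<Rightarrow> 'b) \<Rightarrow> 'b \<Rightarrow> bool"
  assumes "\<And>n D. \<exists>x. Q n D x"
    and "\<And>n D D' x. (\<And>j. j < n \<Longrightarrow> D j = D' j) \<Longrightarrow> Q n D x \<Longrightarrow> Q n D' x"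
  obtains D where "\<And>n. Q n D (D n)"
proof -
  define f where "f bs n = (SOME x. Q n (\<lambda>j. bs ! j) x)" for bs n
  define D where "D n = f (responses f [0..<n]) n" for n
  have "responses f [0..<n] = map D [0..<n]" for n
    using responses_map_upt[of f id n] by (simp add: D_def)
  then have "Q n (\<lambda>j. map D [0..<n] ! j) (D n)" for n
    using someI_ex[OF assms(1)] by (simp add: D_def f_def)
  then have "Q n D (D n)" for n
    by (rule assms(2)[rotated]) simp
  with that show thesis .
qed

definition G1_strategy_wins :: "'x set set \<Rightarrow> 'x set set \<Rightarrow> ('x set list \<Rightarrow> 'x) \<Rightarrow> bool" where
  "G1_strategy_wins \<A> \<B> \<sigma> \<longleftrightarrow>
     (\<forall>F. (\<forall>n. F n \<in> \<A>) \<longrightarrow>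
        (\<forall>n. \<sigma> (map F [0..<Suc n]) \<in> F n) \<and> range (\<lambda>n. \<sigma> (map F [0..<Suc n])) \<in> \<B>)"

lemma G1_strategy_wins_move:
  "G1_strategy_wins \<A> \<B> \<sigma> \<Longrightarrow> (\<And>n. F n \<in> \<A>) \<Longrightarrow> \<sigma> (map F [0..<Suc n]) \<in> F n"
  unfolding G1_strategy_wins_def by blast

lemma G1_strategy_wins_outcome:
  "G1_strategy_wins \<A> \<B> \<sigma> \<Longrightarrow> (\<And>n. F n \<in> \<A>) \<Longrightarrow> range (\<lambda>n. \<sigma> (map F [0..<Suc n])) \<in> \<B>"
  unfolding G1_strategy_wins_def by blast

lemma II_wins_G1_iff: "II_wins_G1 \<A> \<B> \<longleftrightarrow> (\<exists>\<sigma>. G1_strategy_wins \<A> \<B> \<sigma>)"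
  by (simp add: II_wins_G1_def G1_strategy_wins_def)

lemma G1_strategy_with_memory:
  fixes R :: "'x list \<Rightarrow> 'x \<Rightarrow> bool"
  assumes "\<And>hs A. A \<in> \<A> \<Longrightarrow> \<exists>a\<in>A. R hs a"
  shows "\<exists>\<sigma>. \<forall>F. (\<forall>n. F n \<in> \<A>) \<longrightarrow> (\<forall>n. \<sigma> (map F [0..<Suc n]) \<in> F n \<and>
            R (map (\<lambda>k. \<sigma> (map F [0..<Suc k])) [0..<n]) (\<sigma> (map F [0..<Suc n])))"
proof -
  define answer where "answer hs A = (SOME a. a \<in> A \<and> R hs a)" for hs A
  define \<sigma> where "\<sigma> As = last (responses answer As)" for As
  have "\<sigma> (map F [0..<Suc n]) \<in> F n \<and>
      R (map (\<lambda>k. \<sigma> (map F [0..<Suc k])) [0..<n]) (\<sigma> (map F [0..<Suc n]))"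
    if F: "\<forall>n. F n \<in> \<A>" for F n
  proof -
    define c where "c n = answer (responses answer (map F [0..<n])) (F n)" for n
    have past: "responses answer (map F [0..<n]) = map c [0..<n]" for n
      using responses_map_upt[of answer F n] by (simp add: c_def)
    have c_rec: "c n = answer (map c [0..<n]) (F n)" for n
      using c_def[of n] by (simp only: past)
    have \<sigma>_c: "\<sigma> (map F [0..<Suc n]) = c n" for n
      by (simp add: \<sigma>_def past c_rec[symmetric])
    have "\<exists>a. a \<in> F n \<and> R (map c [0..<n]) a"
      using assms F by blast
    then have "c n \<in> F n \<and> R (map c [0..<n]) (c n)"
      unfolding c_rec[of n] answer_def by (rule someI_ex)
    then show ?thesis
      unfolding \<sigma>_c by simp
  qed
  then show ?thesis
    by blast
qed

section \<open>The point-open game\<close>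

text \<open>A strategy \<open>\<rho>\<close> for player ONE in the point-open game on \<open>X\<close>: ONE plays the point
  \<open>\<rho> [W\<^sub>0, \<dots>, W\<^sub>r\<^sub>-\<^sub>1]\<close>, TWO answers with an open set \<open>W\<^sub>r\<close> containing it, and ONE wins
  if TWO's sets cover \<open>X\<close>.\<close>
definition point_open_winning :: "'a topology \<Rightarrow> ('a set list \<Rightarrow> 'a) \<Rightarrow> bool" where
  "point_open_winning X \<rho> \<longleftrightarrow> (\<forall>t. \<rho> t \<in> topspace X) \<and>
     (\<forall>W. (\<forall>r. openin X (W r) \<and> \<rho> (map W [0..<r]) \<in> W r) \<longrightarrow> \<Union>(range W) = topspace X)"

lemma point_open_winning_in_topspace: "point_open_winning X \<rho> \<Longrightarrow> \<rho> t \<in> topspace X"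
  by (simp add: point_open_winning_def)

lemma point_open_winning_covers:
  "point_open_winning X \<rho> \<Longrightarrow> (\<And>r. openin X (W r)) \<Longrightarrow> (\<And>r. \<rho> (map W [0..<r]) \<in> W r)
    \<Longrightarrow> \<Union>(range W) = topspace X"
  by (simp add: point_open_winning_def)

lemma G1_open_covers_point_witness:
  assumes \<sigma>: "G1_strategy_wins (open_covers X) \<B> \<sigma>" and s: "set s \<subseteq> open_covers X"
  shows "\<exists>x\<in>topspace X. \<forall>V. openin X V \<and> x \<in> V \<longrightarrow> (\<exists>U\<in>open_covers X. \<sigma> (s @ [U]) = V)"
proof (rule ccontr)
  assume no_witness: "\<not> ?thesis"
  have "\<forall>x\<in>topspace X. \<exists>V. openin X V \<and> x \<in> V \<and> (\<forall>U\<in>open_covers X. \<sigma> (s @ [U]) \<noteq> V)"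
  proof
    fix x assume "x \<in> topspace X"
    then have "\<not> (\<forall>V. openin X V \<and> x \<in> V \<longrightarrow> (\<exists>U\<in>open_covers X. \<sigma> (s @ [U]) = V))"
      using no_witness by blast
    then show "\<exists>V. openin X V \<and> x \<in> V \<and> (\<forall>U\<in>open_covers X. \<sigma> (s @ [U]) \<noteq> V)"
      by auto
  qed
  from bchoice[OF this] obtain V where V: "\<forall>x\<in>topspace X.
      openin X (V x) \<and> x \<in> V x \<and> (\<forall>U\<in>open_covers X. \<sigma> (s @ [U]) \<noteq> V x)"
    by blast
  define \<U> where "\<U> = V ` topspace X"
  have "V x \<subseteq> topspace X" if "x \<in> topspace X" for x
    using V that openin_subset by blast
  then have "\<Union>\<U> = topspace X"
    using V by (auto simp: \<U>_def)
  then have \<U>: "\<U> \<in> open_covers X"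
    using V by (auto simp: open_covers_def \<U>_def)
  define F where "F n = (if n < length s then s ! n else \<U>)" for n
  have "F n \<in> open_covers X" for n
    using s \<U> by (auto simp: F_def)
  then have "\<sigma> (map F [0..<Suc (length s)]) \<in> F (length s)"
    by (rule G1_strategy_wins_move[OF \<sigma>])
  moreover have "map F [0..<Suc (length s)] = s @ [\<U>]"
    by (rule nth_equalityI) (auto simp: F_def nth_append)
  ultimately have "\<sigma> (s @ [\<U>]) \<in> \<U>"
    by (simp add: F_def)
  then show False
    using V \<U> by (auto simp: \<U>_def)
qed

text \<open>Galvin's duality: TWO's sets in the point-open game are translated back into open covers
  to which \<open>\<sigma>\<close> would have answered with exactly these sets.\<close>
lemma II_wins_G1_open_covers_imp_point_open_winning:
  assumes "II_wins_G1 (open_covers X) (open_covers X)"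
  obtains \<rho> where "point_open_winning X \<rho>"
proof -
  let ?\<O> = "open_covers X"
  obtain \<sigma> where \<sigma>: "G1_strategy_wins ?\<O> ?\<O> \<sigma>"
    using assms by (auto simp: II_wins_G1_iff)
  have "\<exists>x\<in>topspace X. set s \<subseteq> ?\<O> \<longrightarrow>
      (\<forall>V. openin X V \<and> x \<in> V \<longrightarrow> (\<exists>U\<in>?\<O>. \<sigma> (s @ [U]) = V))" for s
    using G1_open_covers_point_witness[OF \<sigma>, of s] G1_open_covers_point_witness[OF \<sigma>, of "[]"]
    by (cases "set s \<subseteq> ?\<O>") auto
  then obtain point where point: "\<And>s. point s \<in> topspace X"
    "\<And>s V. set s \<subseteq> ?\<O> \<Longrightarrow> openin X V \<Longrightarrow> point s \<in> V \<Longrightarrow> \<exists>U\<in>?\<O>. \<sigma> (s @ [U]) = V"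
    by metis
  define cover where "cover s V = (SOME U. U \<in> ?\<O> \<and> \<sigma> (s @ [U]) = V)" for s V
  define \<rho> where "\<rho> t = point (responses cover t)" for t
  have "\<Union>(range W) = topspace X"
    if W: "\<And>r. openin X (W r) \<and> \<rho> (map W [0..<r]) \<in> W r" for W
  proof -
    define U where "U r = cover (responses cover (map W [0..<r])) (W r)" for r
    have past: "responses cover (map W [0..<r]) = map U [0..<r]" for r
      using responses_map_upt[of cover W r] by (simp add: U_def)
    have U_rec: "U r = cover (map U [0..<r]) (W r)" for r
      using U_def[of r] by (simp only: past)
    have U: "U r \<in> ?\<O> \<and> \<sigma> (map U [0..<r] @ [U r]) = W r" for r
    proof (induction r rule: less_induct)
      case (less r)
      then have "set (map U [0..<r]) \<subseteq> ?\<O>"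
        by auto
      then have "\<exists>U'\<in>?\<O>. \<sigma> (map U [0..<r] @ [U']) = W r"
        using point(2) W[of r] by (simp add: \<rho>_def past)
      then show ?case
        unfolding U_rec[of r] cover_def by (rule someI2_bex) blast
    qed
    then have "range (\<lambda>n. \<sigma> (map U [0..<Suc n])) \<in> ?\<O>"
      by (intro G1_strategy_wins_outcome[OF \<sigma>]) blast
    moreover have "\<sigma> (map U [0..<Suc n]) = W n" for n
      using U[of n] by simp
    ultimately show ?thesis
      by (simp add: open_covers_def)
  qed
  then have "point_open_winning X \<rho>"
    using point(1) by (auto simp: point_open_winning_def \<rho>_def)
  with that show thesis .
qed

lemma filter_upt_enumerate:
  fixes J :: "nat set"
  assumes "infinite J"
  shows "filter (\<lambda>j. j \<in> J) [0..<enumerate J r] = map (enumerate J) [0..<r]"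
proof (rule sorted_distinct_set_unique)
  have mono: "strict_mono (enumerate J)"
    using assms by (rule strict_mono_enumerate)
  show "sorted (map (enumerate J) [0..<r])"
    using mono by (simp add: sorted_iff_nth_mono strict_mono_less_eq)
  show "distinct (map (enumerate J) [0..<r])"
    using strict_mono_imp_inj_on[OF mono] by (simp add: distinct_map inj_on_subset)
  show "set (filter (\<lambda>j. j \<in> J) [0..<enumerate J r]) = set (map (enumerate J) [0..<r])"
  proof (intro subset_antisym subsetI)
    fix j assume j: "j \<in> set (filter (\<lambda>j. j \<in> J) [0..<enumerate J r])"
    then obtain n where "enumerate J n = j"
      using enumerate_Ex[OF assms] by auto
    with j show "j \<in> set (map (enumerate J) [0..<r])"
      using mono strict_mono_less by fastforce
  next
    fix j assume "j \<in> set (map (enumerate J) [0..<r])"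
    then show "j \<in> set (filter (\<lambda>j. j \<in> J) [0..<enumerate J r])"
      using enumerate_in_set[OF assms] mono strict_mono_less by fastforce
  qed
qed (simp_all add: sorted_wrt_filter)

lemma infinite_pigeonhole_nat:
  assumes "finite G" "\<And>j :: nat. \<exists>a\<in>G. P a j"
  shows "\<exists>a\<in>G. infinite {j. P a j}"
proof (rule ccontr)
  assume "\<not> ?thesis"
  then have "finite (\<Union>a\<in>G. {j. P a j})"
    using assms(1) by auto
  moreover have "(\<Union>a\<in>G. {j. P a j}) = UNIV"
    using assms(2) by auto
  ultimately show False
    by simp
qed

text \<open>Otherwise one could always choose a member of the family that contains ONE's answers to all
  plays so far but misses a point of \<open>G\<close>; appending it to the plays of the points it misses,
  some point of \<open>G\<close> is missed infinitely often, and its play is a lost one for \<open>\<rho>\<close>.\<close>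
lemma point_open_winning_forces_finite_set:
  fixes V :: "'i \<Rightarrow> 'a set"
  assumes \<rho>: "point_open_winning X \<rho>" and V: "\<And>k. openin X (V k)"
    and G: "finite G" "G \<subseteq> topspace X"
  shows "\<exists>L. \<forall>k. (\<forall>l\<in>set L. \<rho> (map V l) \<in> V k) \<longrightarrow> G \<subseteq> V k"
proof (rule ccontr)
  assume "\<not> ?thesis"
  then have escape: "\<forall>L. \<exists>k. (\<forall>l\<in>set L. \<rho> (map V l) \<in> V k) \<and> \<not> G \<subseteq> V k"
    by simp
  obtain gs where gs: "set gs = G"
    using finite_list[OF G(1)] by blast
  define nxt where "nxt L = (SOME k. (\<forall>l\<in>set L. \<rho> (map V l) \<in> V k) \<and> \<not> G \<subseteq> V k)" for L
  have nxt: "(\<forall>l\<in>set L. \<rho> (map V l) \<in> V (nxt L)) \<and> \<not> G \<subseteq> V (nxt L)" for L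
    unfolding nxt_def by (rule someI_ex) (use escape in blast)
  define plays where "plays = rec_nat (\<lambda>_. [])
    (\<lambda>_ P a. if a \<notin> V (nxt (map P gs)) then P a @ [nxt (map P gs)] else P a)"
  define lab where "lab j = nxt (map (plays j) gs)" for j
  have plays_0: "plays 0 a = []"
    and plays_Suc: "plays (Suc j) a = (if a \<notin> V (lab j) then plays j a @ [lab j] else plays j a)"
    for j a by (simp_all add: plays_def lab_def)
  have lab: "\<rho> (map V (plays j a)) \<in> V (lab j)" if "a \<in> G" for j a
    using nxt[of "map (plays j) gs"] that gs by (auto simp: lab_def)
  have "\<exists>a\<in>G. a \<notin> V (lab j)" for j
    using nxt by (auto simp: lab_def)
  then have "\<exists>a\<in>G. infinite {j. a \<notin> V (lab j)}"
    by (rule infinite_pigeonhole_nat[OF G(1)])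
  then obtain a J where a: "a \<in> G" and J: "J = {j. a \<notin> V (lab j)}" "infinite J"
    by blast
  have plays_filter: "plays j a = map lab (filter (\<lambda>j. j \<in> J) [0..<j])" for j
    by (induction j) (simp_all add: plays_0 plays_Suc J(1))
  define W where "W r = V (lab (enumerate J r))" for r
  have "map W [0..<r] = map V (plays (enumerate J r) a)" for r
    by (simp add: W_def plays_filter filter_upt_enumerate[OF J(2)])
  then have "\<rho> (map W [0..<r]) \<in> W r" for r
    using lab[OF a] by (simp add: W_def)
  moreover have "openin X (W r)" for r
    using V by (simp add: W_def)
  ultimately have "\<Union>(range W) = topspace X"
    using point_open_winning_covers[OF \<rho>] by blast
  then obtain r where "a \<in> V (lab (enumerate J r))"
    using a G(2) by (auto simp: W_def)
  moreover have "enumerate J r \<in> J"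
    using J(2) by (rule enumerate_in_set)
  ultimately show False
    using J(1) by simp
qed

section \<open>Approximation in stages\<close>

text \<open>\<open>D n i\<close> is the \<open>i\<close>-th function chosen at stage \<open>n\<close>; it is required to be
  \<open>1/(n+1)\<close>-close to \<open>g\<close> at the checkpoints of stage \<open>n\<close>, i.e. at ONE's answers to all plays of
  length at most \<open>n\<close> built from the sets of earlier stages with indices below \<open>n\<close>.\<close>
definition stage_nbhd :: "'a topology \<Rightarrow> ('a \<Rightarrow> real) \<Rightarrow> (nat \<Rightarrow> nat \<Rightarrow> 'a \<Rightarrow> real) \<Rightarrow> nat \<times> nat \<Rightarrow> 'a set"
  where "stage_nbhd X g D = (\<lambda>(n, i). approx_set X g (1 / real (Suc n)) (D n i))"

definition checkpoints ::
    "'a topology \<Rightarrow> ('a set list \<Rightarrow> 'a) \<Rightarrow> ('a \<Rightarrow> real) \<Rightarrow> (nat \<Rightarrow> nat \<Rightarrow> 'a \<Rightarrow> real) \<Rightarrow> nat \<Rightarrow> 'a set"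
  where "checkpoints X \<rho> g D n =
    (\<lambda>l. \<rho> (map (stage_nbhd X g D) l)) ` {l. set l \<subseteq> {..<n} \<times> {..<n} \<and> length l \<le> n}"

definition staged_approx ::
    "'a topology \<Rightarrow> ('a set list \<Rightarrow> 'a) \<Rightarrow> ('a \<Rightarrow> real) \<Rightarrow> (nat \<Rightarrow> nat \<Rightarrow> 'a \<Rightarrow> real) \<Rightarrow> bool"
  where "staged_approx X \<rho> g D \<longleftrightarrow> (\<forall>n i. checkpoints X \<rho> g D n \<subseteq> stage_nbhd X g D (n, i))"

lemma finite_checkpoints: "finite (checkpoints X \<rho> g D n)"
  by (simp add: checkpoints_def finite_lists_length_le)

lemma checkpoints_subset_topspace:
  "point_open_winning X \<rho> \<Longrightarrow> checkpoints X \<rho> g D n \<subseteq> topspace X"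
  by (auto simp: checkpoints_def point_open_winning_in_topspace)

lemma checkpoints_cong:
  assumes "\<And>j. j < n \<Longrightarrow> D j = D' j"
  shows "checkpoints X \<rho> g D n = checkpoints X \<rho> g D' n"
proof -
  have "map (stage_nbhd X g D) l = map (stage_nbhd X g D') l" if "set l \<subseteq> {..<n} \<times> {..<n}" for l
    using that assms by (auto simp: stage_nbhd_def)
  then show ?thesis
    unfolding checkpoints_def by (intro image_cong refl) (metis mem_Collect_eq)
qed

lemma checkpoints_eventually:
  fixes L :: "(nat \<times> nat) list list"
  shows "\<exists>N. \<forall>n\<ge>N. \<forall>l\<in>set L. \<rho> (map (stage_nbhd X g D) l) \<in> checkpoints X \<rho> g D n"
proof -
  define K where "K = fst ` set (concat L) \<union> snd ` set (concat L) \<union> length ` set L"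
  have "finite K"
    by (simp add: K_def)
  then obtain N where N: "\<And>x. x \<in> K \<Longrightarrow> x < N"
    by (meson finite_nat_set_iff_bounded)
  have "set l \<subseteq> {..<n} \<times> {..<n} \<and> length l \<le> n" if "N \<le> n" "l \<in> set L" for n l
  proof -
    have lt: "x < n" if "x \<in> K" for x
      using N[OF that] \<open>N \<le> n\<close> by linarith
    have "p \<in> {..<n} \<times> {..<n}" if "p \<in> set l" for p
    proof -
      have "p \<in> set (concat L)"
        using \<open>l \<in> set L\<close> that by auto
      then have "fst p \<in> K" "snd p \<in> K"
        by (auto simp: K_def)
      then show ?thesis
        using lt by (auto simp: mem_Times_iff)
    qed
    moreover have "length l < n"
      using lt \<open>l \<in> set L\<close> by (simp add: K_def)
    ultimately show ?thesis
      by auto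
  qed
  then show ?thesis
    unfolding checkpoints_def by (intro exI[of _ N] allI impI ballI image_eqI[OF refl]) auto
qed

text \<open>The finitely many plays obtained from a basic neighbourhood \<open>T\<close> of \<open>g\<close> are checkpoints of
  all late stages, so every member of a late stage lies in \<open>T\<close>.\<close>
lemma staged_approx_meets_open:
  assumes \<rho>: "point_open_winning X \<rho>" and D: "staged_approx X \<rho> g D" "\<And>n i. D n i \<in> topspace (Cp X)"
    and g: "g \<in> topspace (Cp X)" and T: "openin (Cp X) T" "g \<in> T"
    and P: "\<And>n. \<exists>i. P n i"
  shows "\<exists>n i. P n i \<and> D n i \<in> T"
proof -
  obtain G e where G: "finite G" "G \<subseteq> topspace X" and "e > 0"
    and GT: "\<And>f. f \<in> topspace (Cp X) \<Longrightarrow> G \<subseteq> approx_set X g e f \<Longrightarrow> f \<in> T"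
    using Cp_approx_nbhd_basis[OF T] by blast
  have "openin X (stage_nbhd X g D k)" for k
    using openin_approx_set[OF D(2) g] by (simp add: stage_nbhd_def split: prod.split)
  from point_open_winning_forces_finite_set[where V = "stage_nbhd X g D", OF \<rho> this G]
  obtain L where L: "\<And>k. \<forall>l\<in>set L. \<rho> (map (stage_nbhd X g D) l) \<in> stage_nbhd X g D k
      \<Longrightarrow> G \<subseteq> stage_nbhd X g D k"
    by blast
  obtain N where N: "\<forall>n\<ge>N. \<forall>l\<in>set L. \<rho> (map (stage_nbhd X g D) l) \<in> checkpoints X \<rho> g D n"
    using checkpoints_eventually by blast
  obtain m where m: "inverse (real (Suc m)) < e"
    using reals_Archimedean[OF \<open>e > 0\<close>] ..
  define n where "n = max N m"
  obtain i where "P n i"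
    using P ..
  have "\<forall>l\<in>set L. \<rho> (map (stage_nbhd X g D) l) \<in> stage_nbhd X g D (n, i)"
    using N D(1) unfolding staged_approx_def n_def by fastforce
  then have "G \<subseteq> stage_nbhd X g D (n, i)"
    by (rule L)
  moreover have "1 / real (Suc n) \<le> e"
  proof -
    have "1 / real (Suc n) \<le> 1 / real (Suc m)"
      by (rule divide_left_mono) (auto simp: n_def)
    with m show ?thesis
      by (simp add: inverse_eq_divide)
  qed
  ultimately have "G \<subseteq> approx_set X g e (D n i)"
    using approx_set_mono by (fastforce simp: stage_nbhd_def)
  then show ?thesis
    using GT D(2) \<open>P n i\<close> by blast
qed

lemma staged_approx_closure:
  assumes "point_open_winning X \<rho>" "staged_approx X \<rho> g D" "\<And>n i. D n i \<in> topspace (Cp X)"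
    and g: "g \<in> topspace (Cp X)"
  shows "g \<in> Cp X closure_of range (case_prod D)"
  unfolding in_closure_of
proof (intro conjI allI impI g)
  fix T assume "g \<in> T \<and> openin (Cp X) T"
  then obtain n i where "D n i \<in> T"
    using staged_approx_meets_open[where P = "\<lambda>_ _. True", OF assms] by blast
  then show "\<exists>f. f \<in> range (case_prod D) \<and> f \<in> T"
    by force
qed

lemma staged_approx_prod_closure:
  assumes \<rho>: "point_open_winning X \<rho>" and staged: "staged_approx X \<rho> g (\<lambda>n i. fst (D n i))"
    and D: "\<And>n i. fst (D n i) \<in> topspace (Cp X)" and g: "g \<in> topspace (Cp X)"
    and y: "\<And>n. y \<in> Y closure_of (snd ` range (D n))"
  shows "(g, y) \<in> prod_topology (Cp X) Y closure_of range (case_prod D)"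
  unfolding in_closure_of
proof (intro conjI allI impI)
  show "(g, y) \<in> topspace (prod_topology (Cp X) Y)"
    using g y[of 0] by (simp add: in_closure_of)
next
  fix W assume "(g, y) \<in> W \<and> openin (prod_topology (Cp X) Y) W"
  then have "\<exists>T U. openin (Cp X) T \<and> openin Y U \<and> g \<in> T \<and> y \<in> U \<and> T \<times> U \<subseteq> W"
    using openin_prod_topology_alt[THEN iffD1, rule_format, of "Cp X" Y W g y] by simp
  then obtain T U where T: "openin (Cp X) T" "g \<in> T" and U: "openin Y U" "y \<in> U"
    and TUW: "T \<times> U \<subseteq> W"
    by blast
  have "\<exists>i. snd (D n i) \<in> U" for n
    using y[of n] U unfolding in_closure_of by blast
  from staged_approx_meets_open[where P = "\<lambda>n i. snd (D n i) \<in> U", OF \<rho> staged D g T this]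
  obtain n i where "snd (D n i) \<in> U" "fst (D n i) \<in> T"
    by blast
  then show "\<exists>q. q \<in> range (case_prod D) \<and> q \<in> W"
    using TUW by (intro exI[of _ "D n i"]) (auto simp: mem_Times_iff)
qed

lemma point_open_winning_imp_II_wins_Omega_o:
  assumes \<rho>: "point_open_winning X \<rho>"
  shows "II_wins_G1 (Omega_o X) (Omega_o X)"
proof -
  define g where "g = zero_fun X"
  have g: "g \<in> topspace (Cp X)"
    by (simp add: g_def zero_fun_in_topspace_Cp)
  define R where "R hs f \<longleftrightarrow> checkpoints X \<rho> g (\<lambda>j _. hs ! j) (length hs)
      \<subseteq> approx_set X g (1 / real (Suc (length hs))) f" for hs f
  have "\<exists>f\<in>A. R hs f" if "A \<in> Omega_o X" for hs A
    unfolding R_def g_def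
    by (rule Omega_o_approx[where e = "1 / real (Suc (length hs))",
          OF that finite_checkpoints checkpoints_subset_topspace[OF \<rho>]]) simp
  then obtain \<sigma> where \<sigma>: "\<And>F n. \<forall>n. F n \<in> Omega_o X \<Longrightarrow> \<sigma> (map F [0..<Suc n]) \<in> F n \<and>
      R (map (\<lambda>k. \<sigma> (map F [0..<Suc k])) [0..<n]) (\<sigma> (map F [0..<Suc n]))"
    using G1_strategy_with_memory[of "Omega_o X" R] by blast
  have "G1_strategy_wins (Omega_o X) (Omega_o X) \<sigma>"
    unfolding G1_strategy_wins_def
  proof (intro allI impI)
    fix F :: "nat \<Rightarrow> ('a \<Rightarrow> real) set"
    assume F: "\<forall>n. F n \<in> Omega_o X"
    define c where "c = (\<lambda>n. \<sigma> (map F [0..<Suc n]))"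
    have c: "c n \<in> F n \<and> R (map c [0..<n]) (c n)" for n
      using \<sigma>[OF F, of n] unfolding c_def by blast
    have "checkpoints X \<rho> g (\<lambda>j _. map c [0..<n] ! j) n = checkpoints X \<rho> g (\<lambda>j _. c j) n" for n
      by (rule checkpoints_cong) simp
    then have staged: "staged_approx X \<rho> g (\<lambda>j _. c j)"
      using c by (simp add: R_def staged_approx_def stage_nbhd_def)
    have c_Cp: "c n \<in> topspace (Cp X)" for n
      using c F by (auto simp: Omega_o_def)
    have "range (\<lambda>(j, i :: nat). c j) = range c"
      by auto
    then have "g \<in> Cp X closure_of range c"
      using staged_approx_closure[OF \<rho> staged c_Cp g] by simp
    moreover have "g \<notin> range c"
    proof
      assume "g \<in> range c"
      then obtain n where "c n = g"
        by blast
      moreover have "g \<notin> F n"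
        using F by (simp add: Omega_o_def g_def)
      ultimately show False
        using c[of n] by simp
    qed
    ultimately have "range c \<in> Omega_o X"
      using c_Cp by (auto simp: Omega_o_def g_def)
    then show "(\<forall>n. \<sigma> (map F [0..<Suc n]) \<in> F n) \<and> range (\<lambda>n. \<sigma> (map F [0..<Suc n])) \<in> Omega_o X"
      using c unfolding c_def by blast
  qed
  then show ?thesis
    by (auto simp: II_wins_G1_iff)
qed

lemma point_open_winning_imp_countably_tight_prod_Cp:
  assumes \<rho>: "point_open_winning X \<rho>" and Y: "countably_tight Y"
  shows "countably_tight (prod_topology (Cp X) Y)"
  unfolding countably_tight_def
proof (intro allI impI, elim conjE)
  fix A :: "(('a \<Rightarrow> real) \<times> 'b) set" and p
  assume A: "A \<subseteq> topspace (prod_topology (Cp X) Y)" and p: "p \<in> prod_topology (Cp X) Y closure_of A"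
  obtain g y where p_eq: "p = (g, y)"
    by fastforce
  have g: "g \<in> topspace (Cp X)"
    using p by (auto simp: p_eq in_closure_of)
  define near where "near F e = {q \<in> A. F \<subseteq> approx_set X g e (fst q)}" for F e
  define valid_stage where "valid_stage n D x \<longleftrightarrow>
      range x \<subseteq> near (checkpoints X \<rho> g (\<lambda>j i. fst (D j i)) n) (1 / real (Suc n)) \<and>
      y \<in> Y closure_of (snd ` range x)"
    for n and D :: "nat \<Rightarrow> nat \<Rightarrow> ('a \<Rightarrow> real) \<times> 'b" and x :: "nat \<Rightarrow> ('a \<Rightarrow> real) \<times> 'b"
  obtain D where D: "\<And>n. valid_stage n D (D n)"
  proof (rule course_of_values_choice)
    fix n and D :: "nat \<Rightarrow> nat \<Rightarrow> ('a \<Rightarrow> real) \<times> 'b"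
    let ?F = "checkpoints X \<rho> g (\<lambda>j i. fst (D j i)) n"
    have "snd ` near ?F (1 / real (Suc n)) \<subseteq> topspace Y"
      using A by (auto simp: near_def)
    moreover have "y \<in> Y closure_of (snd ` near ?F (1 / real (Suc n)))"
      unfolding near_def using p p_eq finite_checkpoints checkpoints_subset_topspace[OF \<rho>]
      by (intro in_closure_of_prod_Cp_approx) auto
    ultimately show "\<exists>x. valid_stage n D x"
      unfolding valid_stage_def by (rule countably_tight_closure_seq[OF Y])
  next
    fix n and D D' :: "nat \<Rightarrow> nat \<Rightarrow> ('a \<Rightarrow> real) \<times> 'b" and x
    assume "\<And>j. j < n \<Longrightarrow> D j = D' j" "valid_stage n D x"
    moreover have "checkpoints X \<rho> g (\<lambda>j i. fst (D j i)) n = checkpoints X \<rho> g (\<lambda>j i. fst (D' j i)) n"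
      using calculation(1) by (intro checkpoints_cong) simp
    ultimately show "valid_stage n D' x"
      by (simp add: valid_stage_def)
  qed blast
  have D_A: "D n i \<in> A" for n i
    using D[of n] by (auto simp: valid_stage_def near_def)
  have D_Cp: "fst (D n i) \<in> topspace (Cp X)" for n i
  proof -
    have "D n i \<in> topspace (Cp X) \<times> topspace Y"
      using A D_A by auto
    then show ?thesis
      by (simp add: mem_Times_iff)
  qed
  have "staged_approx X \<rho> g (\<lambda>n i. fst (D n i))"
    using D by (fastforce simp: valid_stage_def near_def staged_approx_def stage_nbhd_def)
  then have "p \<in> prod_topology (Cp X) Y closure_of range (case_prod D)"
    unfolding p_eq using staged_approx_prod_closure[OF \<rho> _ D_Cp g] D by (simp add: valid_stage_def)
  moreover have "countable (range (case_prod D))" "range (case_prod D) \<subseteq> A"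
    using D_A by auto
  ultimately show "\<exists>B\<subseteq>A. countable B \<and> p \<in> prod_topology (Cp X) Y closure_of B"
    by blast
qed

theorem proposition3p4:
  fixes X :: "'a topology"
  assumes "tychonoff_space X"
      and "II_wins_G1 (open_covers X) (open_covers X)"
  shows "II_wins_G1 (Omega_o X) (Omega_o X) \<and>
         (\<forall>Y :: 'b topology. countably_tight Y \<longrightarrow> countably_tight (prod_topology (Cp X) Y))"
proof -
  obtain \<rho> where \<rho>: "point_open_winning X \<rho>"
    using II_wins_G1_open_covers_imp_point_open_winning[OF assms(2)] by blast
  show ?thesis
    using point_open_winning_imp_II_wins_Omega_o[OF \<rho>]
      point_open_winning_imp_countably_tight_prod_Cp[OF \<rho>] by blast
qed

end
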